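(* Let $\epsilon=(\epsilon_n)\in(0,1]^{\mathbb{N}}$, let $x=(x_n),y=(y_n)\in\hat{\mathbb{C}}^{\mathbb{N}}$ be sequences of points of the Riemann sphere, regarded as points of $\mathbb{P}^1(A^\epsilon)$, and let $\omega\in\beta\mathbb{N}$. Then \[\lim_\omega d_{\mathbb{P}^1(\mathbb{C})}(x_n,y_n)^{\epsilon_n}=\lim_\omega d_{\mathbb{P}^1(\mathbb{C}_{\epsilon_n})}(s_{\epsilon_n}^{-1}x_n,s_{\epsilon_n}^{-1}y_n)=d_{\mathbb{P}^1(\mathscr{H}(\omega))}(x_\omega,y_\omega).\]
   Context: $A^\epsilon=\{(x_n)\in\mathbb{C}^{\mathbb{N}}:\sup_n|x_n|^{\epsilon_n}<\infty\}$ with norm $\sup_n|x_n|^{\epsilon_n}$; $\beta\mathbb{N}$ the ultrafilters on $\mathbb{N}$; $\mathscr{H}(\omega)$ the completion of $A^\epsilon/\{x:\lim_\omega|x_n|^{\epsilon_n}=0\}$ with norm $|x|_\omega=\lim_\omega|x_n|^{\epsilon_n}$. A sequence $(x_n)$ in $\hat{\mathbb{C}}$ defines a point of $\mathbb{P}^1(A^\epsilon)$: write $x_n=[z_{0,n}\colon z_{1,n}]$ with $\max(|z_{0,n}|,|z_{1,n}|)=1$, and take $[z_0\colon z_1]$ with $z_i=(z_{i,n})\in A^\epsilon$ (this gives a bijection $\hat{\mathbb{C}}^{\mathbb{N}}\to\mathbb{P}^1(A^\epsilon)$); $x_\omega\in\mathbb{P}^1(\mathscr{H}(\omega))$ is its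 image $[z_{0,\omega}\colon z_{1,\omega}]$. $\mathbb{C}_e=(\mathbb{C},|\cdot|^e)$, and $s_e\colon\mathbb{P}^{1,an}_{\mathbb{C}_e}\to\hat{\mathbb{C}}$ is the homeomorphism sending a seminorm to its $1/e$-th power (restricting to the identity of $\mathbb{P}^1(\mathbb{C})$ on rigid points). Spherical distances: on $\mathbb{P}^1(k)$ with $k$ Archimedean isometric to $\mathbb{C}_e$ (norm $|\cdot|_k$), $d([z_0\colon z_1],[w_0\colon w_1])=\frac{|z_0w_1-z_1w_0|_k}{(|z_0|_k^{2/e}+|z_1|_k^{2/e})^{e/2}(|w_0|_k^{2/e}+|w_1|_k^{2/e})^{e/2}}$ (for $e=1$ this is the standard chordal metric $d_{\mathbb{P}^1(\mathbb{C})}$); for $k$ non-Archimedean, $d=\frac{|z_0w_1-z_1w_0|}{\max\{|z_0|,|z_1|\}\max\{|w_0|,|w_1|\}}$. *)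

theory Defs
  imports "HOL-Analysis.Analysis"
begin

definition is_ultrafilter :: "nat filter \<Rightarrow> bool" where
  "is_ultrafilter \<omega> \<longleftrightarrow> \<omega> \<noteq> bot \<and>
     (\<forall>P. eventually P \<omega> \<or> eventually (\<lambda>n. \<not> P n) \<omega>)"

definition Aeps :: "(nat \<Rightarrow> real) \<Rightarrow> (nat \<Rightarrow> complex) set" where
  "Aeps \<epsilon> = {a. bdd_above (range (\<lambda>n. cmod (a n) powr \<epsilon> n))}"

definition Aeps_norm :: "(nat \<Rightarrow> real) \<Rightarrow> (nat \<Rightarrow> complex) \<Rightarrow> real" where
  "Aeps_norm \<epsilon> a = (SUP n. cmod (a n) powr \<epsilon> n)"

definition om_norm :: "(nat \<Rightarrow> real) \<Rightarrow> nat filter \<Rightarrow> (nat \<Rightarrow> complex) \<Rightarrow> real" where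
  "om_norm \<epsilon> \<omega> a = Lim \<omega> (\<lambda>n. cmod (a n) powr \<epsilon> n)"

text \<open>Cauchy sequences (indexed by k) of elements of A^eps for the seminorm |.|_omega;
  the completion of the quotient by the kernel is the set of such sequences modulo
  sequences tending to 0 for |.|_omega.\<close>
definition Hcauchy :: "(nat \<Rightarrow> real) \<Rightarrow> nat filter \<Rightarrow> (nat \<Rightarrow> nat \<Rightarrow> complex) set" where
  "Hcauchy \<epsilon> \<omega> = {s. (\<forall>k. s k \<in> Aeps \<epsilon>) \<and>
     (\<forall>r>0. \<exists>N. \<forall>k\<ge>N. \<forall>l\<ge>N. om_norm \<epsilon> \<omega> (\<lambda>n. s k n - s l n) < r)}"

definition Hrel :: "(nat \<Rightarrow> real) \<Rightarrow> nat filter \<Rightarrow>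
    ((nat \<Rightarrow> nat \<Rightarrow> complex) \<times> (nat \<Rightarrow> nat \<Rightarrow> complex)) set" where
  "Hrel \<epsilon> \<omega> = {(s, t). s \<in> Hcauchy \<epsilon> \<omega> \<and> t \<in> Hcauchy \<epsilon> \<omega> \<and>
     (\<lambda>k. om_norm \<epsilon> \<omega> (\<lambda>n. s k n - t k n)) \<longlonglongrightarrow> 0}"

type_synonym Helt = "(nat \<Rightarrow> nat \<Rightarrow> complex) set"

definition Hcarrier :: "(nat \<Rightarrow> real) \<Rightarrow> nat filter \<Rightarrow> Helt set" where
  "Hcarrier \<epsilon> \<omega> = Hcauchy \<epsilon> \<omega> // Hrel \<epsilon> \<omega>"

definition Hclass :: "(nat \<Rightarrow> real) \<Rightarrow> nat filter \<Rightarrow> (nat \<Rightarrow> nat \<Rightarrow> complex) \<Rightarrow> Helt" where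
  "Hclass \<epsilon> \<omega> s = Hrel \<epsilon> \<omega> `` {s}"

definition Hrep :: "Helt \<Rightarrow> (nat \<Rightarrow> nat \<Rightarrow> complex)" where
  "Hrep X = (SOME s. s \<in> X)"

definition Hadd :: "(nat \<Rightarrow> real) \<Rightarrow> nat filter \<Rightarrow> Helt \<Rightarrow> Helt \<Rightarrow> Helt" where
  "Hadd \<epsilon> \<omega> X Y = Hclass \<epsilon> \<omega> (\<lambda>k n. Hrep X k n + Hrep Y k n)"

definition Hsub :: "(nat \<Rightarrow> real) \<Rightarrow> nat filter \<Rightarrow> Helt \<Rightarrow> Helt \<Rightarrow> Helt" where
  "Hsub \<epsilon> \<omega> X Y = Hclass \<epsilon> \<omega> (\<lambda>k n. Hrep X k n - Hrep Y k n)"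

definition Hmul :: "(nat \<Rightarrow> real) \<Rightarrow> nat filter \<Rightarrow> Helt \<Rightarrow> Helt \<Rightarrow> Helt" where
  "Hmul \<epsilon> \<omega> X Y = Hclass \<epsilon> \<omega> (\<lambda>k n. Hrep X k n * Hrep Y k n)"

definition Hemb :: "(nat \<Rightarrow> real) \<Rightarrow> nat filter \<Rightarrow> (nat \<Rightarrow> complex) \<Rightarrow> Helt" where
  "Hemb \<epsilon> \<omega> a = Hclass \<epsilon> \<omega> (\<lambda>k. a)"

definition Hone :: "(nat \<Rightarrow> real) \<Rightarrow> nat filter \<Rightarrow> Helt" where
  "Hone \<epsilon> \<omega> = Hemb \<epsilon> \<omega> (\<lambda>n. 1)"

definition Hnorm :: "(nat \<Rightarrow> real) \<Rightarrow> nat filter \<Rightarrow> Helt \<Rightarrow> real" where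
  "Hnorm \<epsilon> \<omega> X = lim (\<lambda>k. om_norm \<epsilon> \<omega> (Hrep X k))"

definition H_nonarch :: "(nat \<Rightarrow> real) \<Rightarrow> nat filter \<Rightarrow> bool" where
  "H_nonarch \<epsilon> \<omega> \<longleftrightarrow> (\<forall>X\<in>Hcarrier \<epsilon> \<omega>. \<forall>Y\<in>Hcarrier \<epsilon> \<omega>.
      Hnorm \<epsilon> \<omega> (Hadd \<epsilon> \<omega> X Y) \<le> max (Hnorm \<epsilon> \<omega> X) (Hnorm \<epsilon> \<omega> Y))"

definition H_isometric_Ce :: "(nat \<Rightarrow> real) \<Rightarrow> nat filter \<Rightarrow> real \<Rightarrow> bool" where
  "H_isometric_Ce \<epsilon> \<omega> e \<longleftrightarrow> (\<exists>\<phi>. bij_betw \<phi> UNIV (Hcarrier \<epsilon> \<omega>) \<and>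
      (\<forall>a b. \<phi> (a + b) = Hadd \<epsilon> \<omega> (\<phi> a) (\<phi> b)) \<and>
      (\<forall>a b. \<phi> (a * b) = Hmul \<epsilon> \<omega> (\<phi> a) (\<phi> b)) \<and>
      \<phi> 1 = Hone \<epsilon> \<omega> \<and>
      (\<forall>z. Hnorm \<epsilon> \<omega> (\<phi> z) = cmod z powr e))"

text \<open>Archimedean spherical distance on P^1(k), k isometric to C_e, expressed via the
  norm values |z0 w1 - z1 w0|_k, |z0|_k, |z1|_k, |w0|_k, |w1|_k.\<close>
definition sph_arch :: "real \<Rightarrow> real \<Rightarrow> real \<Rightarrow> real \<Rightarrow> real \<Rightarrow> real \<Rightarrow> real" where
  "sph_arch e nD nz0 nz1 nw0 nw1 =
     nD / ((nz0 powr (2/e) + nz1 powr (2/e)) powr (e/2) *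
           (nw0 powr (2/e) + nw1 powr (2/e)) powr (e/2))"

definition sph_nonarch :: "real \<Rightarrow> real \<Rightarrow> real \<Rightarrow> real \<Rightarrow> real \<Rightarrow> real" where
  "sph_nonarch nD nz0 nz1 nw0 nw1 = nD / (max nz0 nz1 * max nw0 nw1)"

definition dist_P1_Ce :: "real \<Rightarrow> complex \<times> complex \<Rightarrow> complex \<times> complex \<Rightarrow> real" where
  "dist_P1_Ce e z w = (let nrm = (\<lambda>c. cmod c powr e) in
     sph_arch e (nrm (fst z * snd w - snd z * fst w))
       (nrm (fst z)) (nrm (snd z)) (nrm (fst w)) (nrm (snd w)))"

text \<open>the standard chordal metric on P^1(C) = Riemann sphere (the case e = 1)\<close>
definition dist_P1_C :: "complex \<times> complex \<Rightarrow> complex \<times> complex \<Rightarrow> real" where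
  "dist_P1_C z w = dist_P1_Ce 1 z w"

definition dist_P1_H :: "(nat \<Rightarrow> real) \<Rightarrow> nat filter \<Rightarrow> Helt \<times> Helt \<Rightarrow> Helt \<times> Helt \<Rightarrow> real" where
  "dist_P1_H \<epsilon> \<omega> z w = (let nrm = Hnorm \<epsilon> \<omega>;
      D = Hsub \<epsilon> \<omega> (Hmul \<epsilon> \<omega> (fst z) (snd w)) (Hmul \<epsilon> \<omega> (snd z) (fst w)) in
     if H_nonarch \<epsilon> \<omega>
     then sph_nonarch (nrm D) (nrm (fst z)) (nrm (snd z)) (nrm (fst w)) (nrm (snd w))
     else sph_arch (SOME e. e > 0 \<and> H_isometric_Ce \<epsilon> \<omega> e)
            (nrm D) (nrm (fst z)) (nrm (snd z)) (nrm (fst w)) (nrm (snd w)))"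

text \<open>x_omega: image in P^1(H(omega)) of the point [z0:z1] of P^1(A^eps) given by a sequence
  of normalized homogeneous coordinates x n = (z0_n, z1_n), max(|z0_n|,|z1_n|) = 1.\<close>
definition pt_omega :: "(nat \<Rightarrow> real) \<Rightarrow> nat filter \<Rightarrow> (nat \<Rightarrow> complex \<times> complex) \<Rightarrow> Helt \<times> Helt" where
  "pt_omega \<epsilon> \<omega> x = (Hemb \<epsilon> \<omega> (\<lambda>n. fst (x n)), Hemb \<epsilon> \<omega> (\<lambda>n. snd (x n)))"

end

theory Submission
  imports Defs
begin

text \<open>
  Along \<open>\<omega>\<close> the exponents \<open>\<epsilon>\<^sub>n\<close> converge to some \<open>e \<in> [0, 1]\<close>.
  If \<open>e > 0\<close>, every element of \<open>A\<^sup>\<epsilon>\<close> is bounded \<open>\<omega>\<close>-almost everywhere, hence has an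
  \<open>\<omega>\<close>-limit \<open>l\<close> with \<open>|a|\<^sub>\<omega> = |l|\<^sup>e\<close>; so the constant sequences exhaust \<open>\<H>(\<omega>)\<close>, which is
  isometric to \<open>\<complex>\<^sub>e\<close>, and the distance of \<open>x\<^sub>\<omega>\<close> and \<open>y\<^sub>\<omega>\<close> is the Archimedean formula
  evaluated at the \<open>\<omega>\<close>-limits of \<open>|z\<^sub>i\<^sub>,\<^sub>n|\<^bsup>\<epsilon>\<^sub>n\<^esup>\<close> and \<open>|z\<^sub>0w\<^sub>1 - z\<^sub>1w\<^sub>0|\<^bsup>\<epsilon>\<^sub>n\<^esup>\<close>. These are the
  limits of the ingredients of the same formula for \<open>\<complex>\<^bsub>\<epsilon>\<^sub>n\<^esub>\<close>, so continuity finishes the proof.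
  If \<open>e = 0\<close>, the factor \<open>2\<^bsup>\<epsilon>\<^sub>n\<^esup>\<close> in \<open>|a + b|\<^bsup>\<epsilon>\<^sub>n\<^esup> \<le> 2\<^bsup>\<epsilon>\<^sub>n\<^esup> max(|a|\<^bsup>\<epsilon>\<^sub>n\<^esup>, |b|\<^bsup>\<epsilon>\<^sub>n\<^esup>)\<close> tends to 1,
  so \<open>\<H>(\<omega>)\<close> is non-Archimedean. With normalised coordinates both \<open>max(|z\<^sub>0|\<^sub>\<omega>, |z\<^sub>1|\<^sub>\<omega>)\<close> and
  the denominators \<open>(|z\<^sub>0|\<^sup>2 + |z\<^sub>1|\<^sup>2)\<^bsup>\<epsilon>\<^sub>n/2\<^esup> \<in> [1, 2\<^bsup>\<epsilon>\<^sub>n/2\<^esup>]\<close> tend to 1, and both sides reduce to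
  \<open>|z\<^sub>0w\<^sub>1 - z\<^sub>1w\<^sub>0|\<^sub>\<omega>\<close>. Finally, the chordal distance on \<open>\<P>\<^sup>1(\<complex>)\<close> raised to the power \<open>\<epsilon>\<^sub>n\<close> is
  exactly the distance on \<open>\<P>\<^sup>1(\<complex>\<^bsub>\<epsilon>\<^sub>n\<^esub>)\<close>.
\<close>

lemma ultrafilter_bounded_imp_convergent:
  fixes f :: "nat \<Rightarrow> 'a::{heine_borel,real_normed_vector}"
  assumes ultra: "is_ultrafilter \<omega>" and bounded: "eventually (\<lambda>n. norm (f n) \<le> M) \<omega>"
  shows "\<exists>l. (f \<longlongrightarrow> l) \<omega>"
proof -
  have "filtermap f \<omega> \<noteq> bot"
    using ultra unfolding is_ultrafilter_def by (simp add: filtermap_bot_iff)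
  moreover have "eventually (\<lambda>x. x \<in> cball 0 M) (filtermap f \<omega>)"
    using bounded by (simp add: eventually_filtermap)
  ultimately obtain l where l: "inf (nhds l) (filtermap f \<omega>) \<noteq> bot"
    using compact_cball[of 0 M] unfolding compact_filter by blast
  have "(f \<longlongrightarrow> l) \<omega>"
  proof (rule topological_tendstoI)
    fix S assume S: "open S" "l \<in> S"
    show "eventually (\<lambda>n. f n \<in> S) \<omega>"
    proof (rule ccontr)
      assume "\<not> eventually (\<lambda>n. f n \<in> S) \<omega>"
      then have "eventually (\<lambda>n. f n \<notin> S) \<omega>"
        using ultra unfolding is_ultrafilter_def by blast
      then have "eventually (\<lambda>x. x \<notin> S) (filtermap f \<omega>)"
        by (simp add: eventually_filtermap)
      moreover have "eventually (\<lambda>x. x \<in> S) (nhds l)"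
        using S by (rule eventually_nhds_in_open)
      ultimately have "eventually (\<lambda>x. False) (inf (nhds l) (filtermap f \<omega>))"
        unfolding eventually_inf by blast
      then show False using l by (simp add: eventually_False)
    qed
  qed
  then show ?thesis by blast
qed

lemma powr_le_max_1:
  fixes r e :: real
  assumes "0 \<le> r" "0 < e" "e \<le> 1"
  shows "r powr e \<le> max 1 r"
proof (cases "r \<le> 1")
  case True
  then have "r powr e \<le> 1 powr e" using assms by (intro powr_mono2) auto
  then show ?thesis by simp
next
  case False
  then have "r powr e \<le> r powr 1" using assms by (intro powr_mono) auto
  then show ?thesis using False by simp
qed

lemma powr_add_le:
  fixes x y e :: real
  assumes x: "0 \<le> x" and y: "0 \<le> y" and e: "0 < e" "e \<le> 1"
  shows "(x + y) powr e \<le> x powr e + y powr e"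
proof (cases "x + y = 0")
  case True
  then show ?thesis using x y by simp
next
  case False
  define s where "s = x + y"
  have s: "s > 0" using False x y s_def by simp
  have le_powr: "u / s \<le> (u / s) powr e" if "0 \<le> u" "u \<le> s" for u
  proof -
    have "(u / s) powr 1 \<le> (u / s) powr e"
      using that e s by (intro powr_mono') auto
    then show ?thesis using that s by simp
  qed
  have "x / s + y / s = 1" using s s_def by (simp add: add_divide_distrib[symmetric])
  then have "1 \<le> (x / s) powr e + (y / s) powr e"
    using le_powr[of x] le_powr[of y] x y s_def by linarith
  then have "s powr e * 1 \<le> s powr e * ((x / s) powr e + (y / s) powr e)"
    by (intro mult_left_mono) auto
  also have "\<dots> = x powr e + y powr e"
    using s x y by (simp add: distrib_left powr_divide)
  finally show ?thesis by (simp add: s_def)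
qed

lemma norm_add_powr_le:
  fixes a b :: "'a::real_normed_vector"
  assumes "0 < e" "e \<le> 1"
  shows "norm (a + b) powr e \<le> norm a powr e + norm b powr e"
proof -
  have "norm (a + b) powr e \<le> (norm a + norm b) powr e"
    using assms by (intro powr_mono2 norm_triangle_ineq) auto
  also have "\<dots> \<le> norm a powr e + norm b powr e"
    using assms by (intro powr_add_le) auto
  finally show ?thesis .
qed

lemma max_powr:
  fixes x y e :: real
  assumes "0 \<le> x" "0 \<le> y" "0 < e"
  shows "max x y powr e = max (x powr e) (y powr e)"
  using assms by (cases "x \<le> y") (auto simp: max_def intro!: powr_mono2 order.antisym)

lemma norm_add_powr_le_max:
  fixes a b :: "'a::real_normed_vector"
  assumes "0 < e"
  shows "norm (a + b) powr e \<le> 2 powr e * max (norm a powr e) (norm b powr e)"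
proof -
  have "norm (a + b) powr e \<le> (2 * max (norm a) (norm b)) powr e"
    using assms norm_triangle_ineq[of a b] by (intro powr_mono2) auto
  also have "\<dots> = 2 powr e * max (norm a powr e) (norm b powr e)"
    using assms by (simp add: powr_mult max_powr)
  finally show ?thesis .
qed

locale eps_ultrafilter =
  fixes \<epsilon> :: "nat \<Rightarrow> real" and \<omega> :: "nat filter"
  assumes eps_pos: "\<And>n. 0 < \<epsilon> n" and eps_le_1: "\<And>n. \<epsilon> n \<le> 1"
    and ultra: "is_ultrafilter \<omega>"
begin

abbreviation om where "om \<equiv> om_norm \<epsilon> \<omega>"
abbreviation HC where "HC \<equiv> Hcauchy \<epsilon> \<omega>"
abbreviation HR where "HR \<equiv> Hrel \<epsilon> \<omega>"

lemma omega_ne_bot: "\<omega> \<noteq> bot"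
  using ultra unfolding is_ultrafilter_def by blast

lemma eps_limit:
  obtains e0 where "(\<epsilon> \<longlongrightarrow> e0) \<omega>" "0 \<le> e0"
proof -
  have "eventually (\<lambda>n. norm (\<epsilon> n) \<le> 1) \<omega>"
    using eps_pos eps_le_1 by (intro always_eventually allI) (simp add: less_imp_le)
  then obtain e0 where e0: "(\<epsilon> \<longlongrightarrow> e0) \<omega>"
    using ultrafilter_bounded_imp_convergent[OF ultra] by blast
  moreover have "0 \<le> e0"
    using eps_pos by (intro tendsto_lowerbound[OF e0 _ omega_ne_bot] always_eventually) (auto intro: less_imp_le)
  ultimately show ?thesis using that by blast
qed

section \<open>The ring \<open>A\<^sup>\<epsilon>\<close> and the seminorm \<open>|.|\<^sub>\<omega>\<close>\<close>

lemma Aeps_iff: "a \<in> Aeps \<epsilon> \<longleftrightarrow> (\<exists>M. \<forall>n. cmod (a n) powr \<epsilon> n \<le> M)"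
  unfolding Aeps_def bdd_above_def by auto

lemma Aeps_bounded:
  assumes "\<And>n. cmod (a n) \<le> B"
  shows "a \<in> Aeps \<epsilon>"
proof -
  have "cmod (a n) powr \<epsilon> n \<le> max 1 B" for n
  proof -
    have "cmod (a n) powr \<epsilon> n \<le> max 1 (cmod (a n))"
      using eps_pos eps_le_1 by (intro powr_le_max_1) auto
    also have "\<dots> \<le> max 1 B" using assms by (intro max.mono) auto
    finally show ?thesis .
  qed
  then show ?thesis unfolding Aeps_iff by blast
qed

lemma Aeps_const: "(\<lambda>n. c) \<in> Aeps \<epsilon>"
  by (rule Aeps_bounded[of _ "cmod c"]) simp

lemma Aeps_add:
  assumes "a \<in> Aeps \<epsilon>" "b \<in> Aeps \<epsilon>"
  shows "(\<lambda>n. a n + b n) \<in> Aeps \<epsilon>"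
proof -
  obtain Ma Mb where "\<And>n. cmod (a n) powr \<epsilon> n \<le> Ma" "\<And>n. cmod (b n) powr \<epsilon> n \<le> Mb"
    using assms unfolding Aeps_iff by blast
  then have "cmod (a n + b n) powr \<epsilon> n \<le> Ma + Mb" for n
    using norm_add_powr_le[OF eps_pos eps_le_1, of "a n" "b n" n] by (meson add_mono order_trans)
  then show ?thesis unfolding Aeps_iff by blast
qed

lemma Aeps_diff:
  assumes "a \<in> Aeps \<epsilon>" "b \<in> Aeps \<epsilon>"
  shows "(\<lambda>n. a n - b n) \<in> Aeps \<epsilon>"
proof -
  have "(\<lambda>n. - b n) \<in> Aeps \<epsilon>" using assms(2) by (simp add: Aeps_iff)
  from Aeps_add[OF assms(1) this] show ?thesis by simp
qed

lemma Aeps_mult: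
  assumes "a \<in> Aeps \<epsilon>" "b \<in> Aeps \<epsilon>"
  shows "(\<lambda>n. a n * b n) \<in> Aeps \<epsilon>"
proof -
  obtain Ma Mb where Ma: "\<And>n. cmod (a n) powr \<epsilon> n \<le> Ma" and Mb: "\<And>n. cmod (b n) powr \<epsilon> n \<le> Mb"
    using assms unfolding Aeps_iff by blast
  have "cmod (a n) powr \<epsilon> n * cmod (b n) powr \<epsilon> n \<le> Ma * Mb" for n
    using Ma Mb order_trans[OF powr_ge_zero Ma] by (intro mult_mono) auto
  then have "cmod (a n * b n) powr \<epsilon> n \<le> Ma * Mb" for n
    by (simp add: norm_mult powr_mult)
  then show ?thesis unfolding Aeps_iff by blast
qed

lemma tendsto_om_norm:
  assumes "a \<in> Aeps \<epsilon>"
  shows "((\<lambda>n. cmod (a n) powr \<epsilon> n) \<longlongrightarrow> om a) \<omega>"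
proof -
  obtain M where "\<And>n. cmod (a n) powr \<epsilon> n \<le> M" using assms unfolding Aeps_iff by blast
  then obtain l where l: "((\<lambda>n. cmod (a n) powr \<epsilon> n) \<longlongrightarrow> l) \<omega>"
    using ultrafilter_bounded_imp_convergent[OF ultra, of "\<lambda>n. cmod (a n) powr \<epsilon> n" M] by auto
  moreover have "om a = l" unfolding om_norm_def using omega_ne_bot l by (rule tendsto_Lim)
  ultimately show ?thesis by simp
qed

lemma om_norm_eqI:
  assumes "((\<lambda>n. cmod (a n) powr \<epsilon> n) \<longlongrightarrow> l) \<omega>"
  shows "om a = l"
  unfolding om_norm_def using omega_ne_bot assms by (rule tendsto_Lim)

lemma om_norm_nonneg:
  assumes "a \<in> Aeps \<epsilon>"
  shows "0 \<le> om a"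
  by (rule tendsto_lowerbound[OF tendsto_om_norm[OF assms] _ omega_ne_bot]) simp

lemma om_norm_zero: "om (\<lambda>n. 0) = 0"
  by (rule om_norm_eqI) simp

lemma om_norm_minus_commute: "om (\<lambda>n. a n - b n) = om (\<lambda>n. b n - a n)"
  unfolding om_norm_def by (simp add: norm_minus_commute)

lemma om_norm_add_le:
  assumes "a \<in> Aeps \<epsilon>" "b \<in> Aeps \<epsilon>"
  shows "om (\<lambda>n. a n + b n) \<le> om a + om b"
proof (rule tendsto_le[OF omega_ne_bot])
  show "((\<lambda>n. cmod (a n) powr \<epsilon> n + cmod (b n) powr \<epsilon> n) \<longlongrightarrow> om a + om b) \<omega>"
    using assms by (intro tendsto_add tendsto_om_norm)
  show "((\<lambda>n. cmod (a n + b n) powr \<epsilon> n) \<longlongrightarrow> om (\<lambda>n. a n + b n)) \<omega>"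
    using assms by (intro tendsto_om_norm Aeps_add)
  show "eventually (\<lambda>n. cmod (a n + b n) powr \<epsilon> n \<le> cmod (a n) powr \<epsilon> n + cmod (b n) powr \<epsilon> n) \<omega>"
    using eps_pos eps_le_1 by (intro always_eventually allI norm_add_powr_le)
qed

lemma om_norm_triangle:
  assumes "a \<in> Aeps \<epsilon>" "b \<in> Aeps \<epsilon>" "c \<in> Aeps \<epsilon>"
  shows "om (\<lambda>n. a n - c n) \<le> om (\<lambda>n. a n - b n) + om (\<lambda>n. b n - c n)"
  using om_norm_add_le[OF Aeps_diff[OF assms(1,2)] Aeps_diff[OF assms(2,3)]] by simp

lemma om_norm_abs_diff_le:
  assumes "a \<in> Aeps \<epsilon>" "b \<in> Aeps \<epsilon>"
  shows "\<bar>om a - om b\<bar> \<le> om (\<lambda>n. a n - b n)"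
  using om_norm_triangle[OF assms Aeps_const[of 0]] om_norm_triangle[OF assms(2,1) Aeps_const[of 0]]
    om_norm_minus_commute[of b a] by simp

lemma om_norm_mult:
  assumes "a \<in> Aeps \<epsilon>" "b \<in> Aeps \<epsilon>"
  shows "om (\<lambda>n. a n * b n) = om a * om b"
proof (rule om_norm_eqI)
  have "((\<lambda>n. cmod (a n) powr \<epsilon> n * cmod (b n) powr \<epsilon> n) \<longlongrightarrow> om a * om b) \<omega>"
    using assms by (intro tendsto_mult tendsto_om_norm)
  then show "((\<lambda>n. cmod (a n * b n) powr \<epsilon> n) \<longlongrightarrow> om a * om b) \<omega>"
    by (simp add: norm_mult powr_mult)
qed

lemma om_norm_tendsto_0I:
  assumes "\<And>k. u k \<in> Aeps \<epsilon>" "\<And>k. om (u k) \<le> b k" "b \<longlonglongrightarrow> 0"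
  shows "(\<lambda>k. om (u k)) \<longlonglongrightarrow> 0"
  by (rule tendsto_sandwich[of "\<lambda>k. 0" _ _ b]) (use assms om_norm_nonneg in auto)

definition om_converges_to :: "(nat \<Rightarrow> nat \<Rightarrow> complex) \<Rightarrow> (nat \<Rightarrow> complex) \<Rightarrow> bool" where
  "om_converges_to s a \<longleftrightarrow> (\<lambda>k. om (\<lambda>n. s k n - a n)) \<longlonglongrightarrow> 0"

lemma om_converges_toI:
  assumes "\<And>k. s k \<in> Aeps \<epsilon>" "a \<in> Aeps \<epsilon>"
    and "\<And>k. om (\<lambda>n. s k n - a n) \<le> b k" "b \<longlonglongrightarrow> 0"
  shows "om_converges_to s a"
  unfolding om_converges_to_def using assms by (intro om_norm_tendsto_0I Aeps_diff)

lemma om_converges_to_add: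
  assumes s: "\<And>k. s k \<in> Aeps \<epsilon>" and t: "\<And>k. t k \<in> Aeps \<epsilon>" and a: "a \<in> Aeps \<epsilon>" and b: "b \<in> Aeps \<epsilon>"
    and sa: "om_converges_to s a" and tb: "om_converges_to t b"
  shows "om_converges_to (\<lambda>k n. s k n + t k n) (\<lambda>n. a n + b n)"
proof (rule om_converges_toI)
  show "om (\<lambda>n. s k n + t k n - (a n + b n)) \<le> om (\<lambda>n. s k n - a n) + om (\<lambda>n. t k n - b n)" for k
    using om_norm_add_le[OF Aeps_diff[OF s a] Aeps_diff[OF t b], of k k] by (simp add: algebra_simps)
  show "(\<lambda>k. om (\<lambda>n. s k n - a n) + om (\<lambda>n. t k n - b n)) \<longlonglongrightarrow> 0"
    using tendsto_add[OF sa[unfolded om_converges_to_def] tb[unfolded om_converges_to_def]] by simp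
qed (use s t a b in \<open>auto intro: Aeps_add\<close>)

lemma om_converges_to_uminus:
  assumes "om_converges_to s a"
  shows "om_converges_to (\<lambda>k n. - s k n) (\<lambda>n. - a n)"
  using assms unfolding om_converges_to_def om_norm_def by (simp add: norm_minus_commute)

lemma om_converges_to_diff:
  assumes "\<And>k. s k \<in> Aeps \<epsilon>" "\<And>k. t k \<in> Aeps \<epsilon>" "a \<in> Aeps \<epsilon>" "b \<in> Aeps \<epsilon>"
    and "om_converges_to s a" "om_converges_to t b"
  shows "om_converges_to (\<lambda>k n. s k n - t k n) (\<lambda>n. a n - b n)"
  using om_converges_to_add[OF assms(1) _ assms(3) _ assms(5) om_converges_to_uminus[OF assms(6)]]
    assms(2,4) by (simp add: Aeps_iff)

lemma tendsto_om_norm_if_converges: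
  assumes s: "\<And>k. s k \<in> Aeps \<epsilon>" and a: "a \<in> Aeps \<epsilon>" and sa: "om_converges_to s a"
  shows "(\<lambda>k. om (s k)) \<longlonglongrightarrow> om a"
proof -
  have "(\<lambda>k. om (s k) - om a) \<longlonglongrightarrow> 0"
  proof (rule tendsto_rabs_zero_cancel, rule tendsto_sandwich[of "\<lambda>k. 0" _ _ "\<lambda>k. om (\<lambda>n. s k n - a n)"])
    show "eventually (\<lambda>k. \<bar>om (s k) - om a\<bar> \<le> om (\<lambda>n. s k n - a n)) sequentially"
      using om_norm_abs_diff_le[OF s a] by simp
  qed (use sa in \<open>auto simp: om_converges_to_def\<close>)
  from tendsto_add[OF this tendsto_const[of "om a"]] show ?thesis by simp
qed

lemma om_converges_to_mult:
  assumes s: "\<And>k. s k \<in> Aeps \<epsilon>" and t: "\<And>k. t k \<in> Aeps \<epsilon>" and a: "a \<in> Aeps \<epsilon>" and b: "b \<in> Aeps \<epsilon>"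
    and sa: "om_converges_to s a" and tb: "om_converges_to t b"
  shows "om_converges_to (\<lambda>k n. s k n * t k n) (\<lambda>n. a n * b n)"
proof (rule om_converges_toI)
  show "om (\<lambda>n. s k n * t k n - a n * b n)
      \<le> om (\<lambda>n. s k n - a n) * om (t k) + om a * om (\<lambda>n. t k n - b n)" for k
  proof -
    have "om (\<lambda>n. s k n * t k n - a n * b n) = om (\<lambda>n. (s k n - a n) * t k n + a n * (t k n - b n))"
      by (simp add: algebra_simps)
    also have "\<dots> \<le> om (\<lambda>n. (s k n - a n) * t k n) + om (\<lambda>n. a n * (t k n - b n))"
      using s t a b by (intro om_norm_add_le Aeps_diff Aeps_mult)
    also have "\<dots> = om (\<lambda>n. s k n - a n) * om (t k) + om a * om (\<lambda>n. t k n - b n)"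
      using s t a b by (simp add: om_norm_mult Aeps_diff)
    finally show ?thesis .
  qed
  have "(\<lambda>k. om (\<lambda>n. s k n - a n) * om (t k) + om a * om (\<lambda>n. t k n - b n)) \<longlonglongrightarrow> 0 * om b + om a * 0"
    using sa tb tendsto_om_norm_if_converges[OF t b tb] unfolding om_converges_to_def
    by (intro tendsto_intros)
  then show "(\<lambda>k. om (\<lambda>n. s k n - a n) * om (t k) + om a * om (\<lambda>n. t k n - b n)) \<longlonglongrightarrow> 0"
    by simp
qed (use s t a b in \<open>auto intro: Aeps_mult\<close>)

section \<open>The completion \<open>\<H>(\<omega>)\<close>\<close>

lemma Hcauchy_Aeps: "s \<in> HC \<Longrightarrow> s k \<in> Aeps \<epsilon>"
  by (simp add: Hcauchy_def)

lemma HcauchyD: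
  assumes "s \<in> HC" "0 < r"
  obtains N where "\<And>k l. N \<le> k \<Longrightarrow> N \<le> l \<Longrightarrow> om (\<lambda>n. s k n - s l n) < r"
  using assms unfolding Hcauchy_def by blast

lemma Hcauchy_if_converges:
  assumes s: "\<And>k. s k \<in> Aeps \<epsilon>" and a: "a \<in> Aeps \<epsilon>" and lim: "om_converges_to s a"
  shows "s \<in> HC"
  unfolding Hcauchy_def
proof (intro CollectI conjI allI impI s)
  fix r :: real assume "r > 0"
  then have "eventually (\<lambda>k. om (\<lambda>n. s k n - a n) < r / 2) sequentially"
    using lim unfolding om_converges_to_def by (intro order_tendstoD(2)) auto
  then obtain N where N: "\<And>k. N \<le> k \<Longrightarrow> om (\<lambda>n. s k n - a n) < r / 2"
    unfolding eventually_sequentially by blast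
  have "om (\<lambda>n. s k n - s l n) < r" if "N \<le> k" "N \<le> l" for k l
    using om_norm_triangle[OF s a s, of k l] om_norm_minus_commute[of a "s l"] N[OF that(1)] N[OF that(2)]
    by simp
  then show "\<exists>N. \<forall>k\<ge>N. \<forall>l\<ge>N. om (\<lambda>n. s k n - s l n) < r" by blast
qed

lemma Hcauchy_const: "c \<in> Aeps \<epsilon> \<Longrightarrow> (\<lambda>k. c) \<in> HC"
  by (rule Hcauchy_if_converges) (auto simp: om_converges_to_def om_norm_zero)

lemma Hcauchy_add:
  assumes s: "s \<in> HC" and t: "t \<in> HC"
  shows "(\<lambda>k n. s k n + t k n) \<in> HC"
  unfolding Hcauchy_def
proof (intro CollectI conjI allI impI)
  note sk = Hcauchy_Aeps[OF s] and tk = Hcauchy_Aeps[OF t]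
  show "(\<lambda>n. s k n + t k n) \<in> Aeps \<epsilon>" for k using sk tk by (rule Aeps_add)
  fix r :: real assume "r > 0"
  then have r2: "0 < r / 2" by simp
  obtain N1 where N1: "\<And>k l. N1 \<le> k \<Longrightarrow> N1 \<le> l \<Longrightarrow> om (\<lambda>n. s k n - s l n) < r / 2"
    using HcauchyD[OF s r2] by blast
  obtain N2 where N2: "\<And>k l. N2 \<le> k \<Longrightarrow> N2 \<le> l \<Longrightarrow> om (\<lambda>n. t k n - t l n) < r / 2"
    using HcauchyD[OF t r2] by blast
  have "om (\<lambda>n. s k n + t k n - (s l n + t l n)) < r" if "max N1 N2 \<le> k" "max N1 N2 \<le> l" for k l
  proof -
    have "om (\<lambda>n. s k n + t k n - (s l n + t l n)) = om (\<lambda>n. (s k n - s l n) + (t k n - t l n))"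
      by (simp add: algebra_simps)
    also have "\<dots> \<le> om (\<lambda>n. s k n - s l n) + om (\<lambda>n. t k n - t l n)"
      using sk tk by (intro om_norm_add_le Aeps_diff)
    also have "\<dots> < r" using N1 N2 that by fastforce
    finally show ?thesis .
  qed
  then show "\<exists>N. \<forall>k\<ge>N. \<forall>l\<ge>N. om (\<lambda>n. s k n + t k n - (s l n + t l n)) < r" by blast
qed

lemma convergent_om_norm_Hcauchy:
  assumes "s \<in> HC"
  shows "convergent (\<lambda>k. om (s k))"
proof (rule Cauchy_convergent, unfold Cauchy_iff, intro allI impI)
  fix r :: real assume "r > 0"
  then obtain N where N: "\<And>k l. N \<le> k \<Longrightarrow> N \<le> l \<Longrightarrow> om (\<lambda>n. s k n - s l n) < r"
    using HcauchyD[OF assms] by blast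
  have "norm (om (s k) - om (s l)) < r" if "N \<le> k" "N \<le> l" for k l
    using om_norm_abs_diff_le[OF Hcauchy_Aeps[OF assms] Hcauchy_Aeps[OF assms], of k l] N[OF that]
    by simp
  then show "\<exists>M. \<forall>k\<ge>M. \<forall>l\<ge>M. norm (om (s k) - om (s l)) < r" by blast
qed

lemma equiv_Hrel: "equiv HC HR"
proof (rule equivI)
  show "HR \<subseteq> HC \<times> HC" unfolding Hrel_def by auto
  show "refl_on HC HR" unfolding refl_on_def Hrel_def by (simp add: om_norm_zero)
  show "sym HR" unfolding sym_def
  proof (intro allI impI)
    fix s t assume "(s, t) \<in> HR"
    moreover have "(\<lambda>k. om (\<lambda>n. s k n - t k n)) = (\<lambda>k. om (\<lambda>n. t k n - s k n))"
      by (rule ext) (rule om_norm_minus_commute)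
    ultimately show "(t, s) \<in> HR" unfolding Hrel_def by simp
  qed
  show "trans HR" unfolding trans_def
  proof (intro allI impI)
    fix s t u assume "(s, t) \<in> HR" "(t, u) \<in> HR"
    then have HC: "s \<in> HC" "t \<in> HC" "u \<in> HC"
      and st: "(\<lambda>k. om (\<lambda>n. s k n - t k n)) \<longlonglongrightarrow> 0" and tu: "(\<lambda>k. om (\<lambda>n. t k n - u k n)) \<longlonglongrightarrow> 0"
      unfolding Hrel_def by auto
    have "(\<lambda>k. om (\<lambda>n. s k n - u k n)) \<longlonglongrightarrow> 0"
      using HC tendsto_add[OF st tu]
      by (intro om_norm_tendsto_0I[where b = "\<lambda>k. om (\<lambda>n. s k n - t k n) + om (\<lambda>n. t k n - u k n)"]
          Aeps_diff om_norm_triangle Hcauchy_Aeps) auto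
    then show "(s, u) \<in> HR" using HC unfolding Hrel_def by auto
  qed
qed

lemma Hclass_eqI: "(s, t) \<in> HR \<Longrightarrow> Hclass \<epsilon> \<omega> s = Hclass \<epsilon> \<omega> t"
  unfolding Hclass_def using equiv_Hrel by (rule equiv_class_eq)

lemma Hrep_Hclass:
  assumes "s \<in> HC"
  shows "(s, Hrep (Hclass \<epsilon> \<omega> s)) \<in> HR"
proof -
  have "s \<in> Hclass \<epsilon> \<omega> s" unfolding Hclass_def using equiv_Hrel assms by (rule equiv_class_self)
  then have "Hrep (Hclass \<epsilon> \<omega> s) \<in> Hclass \<epsilon> \<omega> s" unfolding Hrep_def by (rule someI[where P = "\<lambda>t. t \<in> Hclass \<epsilon> \<omega> s"])
  then show ?thesis unfolding Hclass_def by simp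
qed

lemma Hcarrier_Hrep:
  assumes "X \<in> Hcarrier \<epsilon> \<omega>"
  shows "Hrep X \<in> HC" "X = Hclass \<epsilon> \<omega> (Hrep X)"
proof -
  obtain s where s: "s \<in> HC" "X = Hclass \<epsilon> \<omega> s"
    using assms unfolding Hcarrier_def Hclass_def by (auto elim: quotientE)
  have "(s, Hrep X) \<in> HR" using Hrep_Hclass[OF s(1)] s(2) by simp
  then show "Hrep X \<in> HC" "X = Hclass \<epsilon> \<omega> (Hrep X)"
    using s(2) Hclass_eqI unfolding Hrel_def by auto
qed

lemma tendsto_Hnorm_Hclass:
  assumes s: "s \<in> HC"
  shows "(\<lambda>k. om (s k)) \<longlonglongrightarrow> Hnorm \<epsilon> \<omega> (Hclass \<epsilon> \<omega> s)"
proof -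
  define t where "t = Hrep (Hclass \<epsilon> \<omega> s)"
  have st: "(s, t) \<in> HR" using Hrep_Hclass[OF s] by (simp add: t_def)
  then have t: "t \<in> HC" unfolding Hrel_def by simp
  have lim: "(\<lambda>k. om (t k)) \<longlonglongrightarrow> Hnorm \<epsilon> \<omega> (Hclass \<epsilon> \<omega> s)"
    using convergent_om_norm_Hcauchy[OF t] unfolding Hnorm_def t_def by (simp add: convergent_LIMSEQ_iff)
  have "(\<lambda>k. om (t k) - om (s k)) \<longlonglongrightarrow> 0"
  proof (rule tendsto_rabs_zero_cancel, rule tendsto_sandwich[of "\<lambda>k. 0" _ _ "\<lambda>k. om (\<lambda>n. s k n - t k n)"])
    have "\<bar>om (t k) - om (s k)\<bar> \<le> om (\<lambda>n. s k n - t k n)" for k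
      using om_norm_abs_diff_le[OF Hcauchy_Aeps[OF t] Hcauchy_Aeps[OF s], of k k]
        om_norm_minus_commute[of "t k" "s k"] by simp
    then show "eventually (\<lambda>k. \<bar>om (t k) - om (s k)\<bar> \<le> om (\<lambda>n. s k n - t k n)) sequentially"
      by simp
    show "(\<lambda>k. om (\<lambda>n. s k n - t k n)) \<longlonglongrightarrow> 0" using st unfolding Hrel_def by simp
  qed auto
  from tendsto_diff[OF lim this] show ?thesis by simp
qed

lemma tendsto_Hnorm:
  assumes "X \<in> Hcarrier \<epsilon> \<omega>"
  shows "(\<lambda>k. om (Hrep X k)) \<longlonglongrightarrow> Hnorm \<epsilon> \<omega> X"
  using tendsto_Hnorm_Hclass[OF Hcarrier_Hrep(1)[OF assms]] Hcarrier_Hrep(2)[OF assms] by simp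

lemma Hclass_eq_Hemb:
  assumes "\<And>k. s k \<in> Aeps \<epsilon>" "a \<in> Aeps \<epsilon>" "om_converges_to s a"
  shows "Hclass \<epsilon> \<omega> s = Hemb \<epsilon> \<omega> a"
  unfolding Hemb_def
proof (rule Hclass_eqI)
  show "(s, \<lambda>k. a) \<in> HR"
    using assms Hcauchy_if_converges Hcauchy_const unfolding Hrel_def om_converges_to_def by auto
qed

lemma Hemb_in_Hcarrier: "a \<in> Aeps \<epsilon> \<Longrightarrow> Hemb \<epsilon> \<omega> a \<in> Hcarrier \<epsilon> \<omega>"
  unfolding Hemb_def Hclass_def Hcarrier_def by (intro quotientI Hcauchy_const)

lemma Hnorm_Hemb: "a \<in> Aeps \<epsilon> \<Longrightarrow> Hnorm \<epsilon> \<omega> (Hemb \<epsilon> \<omega> a) = om a"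
  using tendsto_Hnorm_Hclass[OF Hcauchy_const, of a] unfolding Hemb_def by (metis LIMSEQ_const_iff)

lemma Hrep_Hemb:
  assumes "a \<in> Aeps \<epsilon>"
  shows "\<And>k. Hrep (Hemb \<epsilon> \<omega> a) k \<in> Aeps \<epsilon>" "om_converges_to (Hrep (Hemb \<epsilon> \<omega> a)) a"
proof -
  have rel: "((\<lambda>k. a), Hrep (Hemb \<epsilon> \<omega> a)) \<in> HR"
    unfolding Hemb_def using Hrep_Hclass[OF Hcauchy_const[OF assms]] .
  then show "\<And>k. Hrep (Hemb \<epsilon> \<omega> a) k \<in> Aeps \<epsilon>" unfolding Hrel_def by (auto intro: Hcauchy_Aeps)
  have "(\<lambda>k. om (\<lambda>n. Hrep (Hemb \<epsilon> \<omega> a) k n - a n)) = (\<lambda>k. om (\<lambda>n. a n - Hrep (Hemb \<epsilon> \<omega> a) k n))"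
    by (rule ext) (rule om_norm_minus_commute)
  with rel show "om_converges_to (Hrep (Hemb \<epsilon> \<omega> a)) a"
    unfolding Hrel_def om_converges_to_def by simp
qed

lemma Hadd_Hemb:
  assumes "a \<in> Aeps \<epsilon>" "b \<in> Aeps \<epsilon>"
  shows "Hadd \<epsilon> \<omega> (Hemb \<epsilon> \<omega> a) (Hemb \<epsilon> \<omega> b) = Hemb \<epsilon> \<omega> (\<lambda>n. a n + b n)"
  unfolding Hadd_def using assms Hrep_Hemb[OF assms(1)] Hrep_Hemb[OF assms(2)]
  by (intro Hclass_eq_Hemb om_converges_to_add Aeps_add) auto

lemma Hsub_Hemb:
  assumes "a \<in> Aeps \<epsilon>" "b \<in> Aeps \<epsilon>"
  shows "Hsub \<epsilon> \<omega> (Hemb \<epsilon> \<omega> a) (Hemb \<epsilon> \<omega> b) = Hemb \<epsilon> \<omega> (\<lambda>n. a n - b n)"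
  unfolding Hsub_def using assms Hrep_Hemb[OF assms(1)] Hrep_Hemb[OF assms(2)]
  by (intro Hclass_eq_Hemb om_converges_to_diff Aeps_diff) auto

lemma Hmul_Hemb:
  assumes "a \<in> Aeps \<epsilon>" "b \<in> Aeps \<epsilon>"
  shows "Hmul \<epsilon> \<omega> (Hemb \<epsilon> \<omega> a) (Hemb \<epsilon> \<omega> b) = Hemb \<epsilon> \<omega> (\<lambda>n. a n * b n)"
  unfolding Hmul_def using assms Hrep_Hemb[OF assms(1)] Hrep_Hemb[OF assms(2)]
  by (intro Hclass_eq_Hemb om_converges_to_mult Aeps_mult) auto

section \<open>The two possible shapes of \<open>\<H>(\<omega>)\<close>\<close>

lemma om_norm_add_le_max:
  assumes "(\<epsilon> \<longlongrightarrow> 0) \<omega>" "a \<in> Aeps \<epsilon>" "b \<in> Aeps \<epsilon>"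
  shows "om (\<lambda>n. a n + b n) \<le> max (om a) (om b)"
proof (rule tendsto_le[OF omega_ne_bot])
  have "((\<lambda>n. 2 powr \<epsilon> n * max (cmod (a n) powr \<epsilon> n) (cmod (b n) powr \<epsilon> n)) \<longlongrightarrow>
      2 powr 0 * max (om a) (om b)) \<omega>"
    using assms by (intro tendsto_intros tendsto_om_norm) auto
  then show "((\<lambda>n. 2 powr \<epsilon> n * max (cmod (a n) powr \<epsilon> n) (cmod (b n) powr \<epsilon> n)) \<longlongrightarrow>
      max (om a) (om b)) \<omega>" by simp
  show "((\<lambda>n. cmod (a n + b n) powr \<epsilon> n) \<longlongrightarrow> om (\<lambda>n. a n + b n)) \<omega>"
    using assms by (intro tendsto_om_norm Aeps_add)
  show "eventually (\<lambda>n. cmod (a n + b n) powr \<epsilon> n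
      \<le> 2 powr \<epsilon> n * max (cmod (a n) powr \<epsilon> n) (cmod (b n) powr \<epsilon> n)) \<omega>"
    using eps_pos by (intro always_eventually allI norm_add_powr_le_max)
qed

lemma H_nonarch_if_eps_tendsto_0:
  assumes e0: "(\<epsilon> \<longlongrightarrow> 0) \<omega>"
  shows "H_nonarch \<epsilon> \<omega>"
  unfolding H_nonarch_def
proof (intro ballI)
  fix X Y assume X: "X \<in> Hcarrier \<epsilon> \<omega>" and Y: "Y \<in> Hcarrier \<epsilon> \<omega>"
  let ?s = "Hrep X" and ?t = "Hrep Y"
  have s: "?s \<in> HC" and t: "?t \<in> HC" using Hcarrier_Hrep X Y by auto
  have "(\<lambda>k. om (\<lambda>n. ?s k n + ?t k n)) \<longlonglongrightarrow> Hnorm \<epsilon> \<omega> (Hadd \<epsilon> \<omega> X Y)"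
    unfolding Hadd_def using s t by (intro tendsto_Hnorm_Hclass Hcauchy_add)
  moreover have "(\<lambda>k. max (om (?s k)) (om (?t k))) \<longlonglongrightarrow> max (Hnorm \<epsilon> \<omega> X) (Hnorm \<epsilon> \<omega> Y)"
    using X Y by (intro tendsto_max tendsto_Hnorm)
  moreover have "om (\<lambda>n. ?s k n + ?t k n) \<le> max (om (?s k)) (om (?t k))" for k
    using e0 Hcauchy_Aeps[OF s] Hcauchy_Aeps[OF t] by (rule om_norm_add_le_max)
  ultimately show "Hnorm \<epsilon> \<omega> (Hadd \<epsilon> \<omega> X Y) \<le> max (Hnorm \<epsilon> \<omega> X) (Hnorm \<epsilon> \<omega> Y)"
    by (intro LIMSEQ_le) auto
qed

context
  fixes e0 :: real
  assumes eps_tendsto: "(\<epsilon> \<longlongrightarrow> e0) \<omega>" and e0_pos: "0 < e0"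
begin

lemma om_norm_eq_powr_lim: "(a \<longlongrightarrow> l) \<omega> \<Longrightarrow> om a = cmod l powr e0"
  using eps_tendsto e0_pos by (intro om_norm_eqI tendsto_powr' tendsto_norm) auto

lemma om_norm_const: "om (\<lambda>n. z) = cmod z powr e0"
  by (rule om_norm_eq_powr_lim) simp

text \<open>Since \<open>\<epsilon>\<^sub>n > e0/2\<close> for \<open>\<omega>\<close>-almost all \<open>n\<close>, a bound on \<open>|a\<^sub>n|\<^bsup>\<epsilon>\<^sub>n\<^esup>\<close> bounds \<open>|a\<^sub>n|\<close> for those \<open>n\<close>.\<close>
lemma Aeps_convergent:
  assumes "a \<in> Aeps \<epsilon>"
  obtains l where "(a \<longlongrightarrow> l) \<omega>"
proof -
  obtain M where M: "\<And>n. cmod (a n) powr \<epsilon> n \<le> M" using assms unfolding Aeps_iff by blast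
  have "eventually (\<lambda>n. e0 / 2 < \<epsilon> n) \<omega>"
    using eps_tendsto e0_pos by (intro order_tendstoD(1)) auto
  then have "eventually (\<lambda>n. norm (a n) \<le> max 1 (M powr (2 / e0))) \<omega>"
  proof (rule eventually_mono)
    fix n assume en: "e0 / 2 < \<epsilon> n"
    show "norm (a n) \<le> max 1 (M powr (2 / e0))"
    proof (cases "cmod (a n) \<le> 1")
      case False
      have "cmod (a n) = cmod (a n) powr 1" using False by simp
      also have "\<dots> \<le> cmod (a n) powr (\<epsilon> n * (2 / e0))"
        using False en e0_pos by (intro powr_mono) (auto simp: field_simps)
      also have "\<dots> = (cmod (a n) powr \<epsilon> n) powr (2 / e0)" by (simp add: powr_powr)
      also have "\<dots> \<le> M powr (2 / e0)" using M e0_pos by (intro powr_mono2) auto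
      finally show ?thesis by simp
    qed simp
  qed
  then show ?thesis using ultrafilter_bounded_imp_convergent[OF ultra] that by blast
qed

lemma Cauchy_limits_Hcauchy:
  assumes s: "s \<in> HC" and l: "\<And>k. (s k \<longlongrightarrow> l k) \<omega>"
  shows "Cauchy l"
  unfolding Cauchy_iff
proof (intro allI impI)
  fix r :: real assume r: "0 < r"
  then obtain N where N: "\<And>k m. N \<le> k \<Longrightarrow> N \<le> m \<Longrightarrow> om (\<lambda>n. s k n - s m n) < r powr e0"
    using HcauchyD[OF s, of "r powr e0"] by auto
  have "norm (l k - l m) < r" if "N \<le> k" "N \<le> m" for k m
  proof (rule ccontr)
    assume "\<not> norm (l k - l m) < r"
    then have "r powr e0 \<le> cmod (l k - l m) powr e0" using r e0_pos by (intro powr_mono2) auto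
    moreover have "om (\<lambda>n. s k n - s m n) = cmod (l k - l m) powr e0"
      using tendsto_diff[OF l[of k] l[of m]] by (rule om_norm_eq_powr_lim)
    ultimately show False using N[OF that] by simp
  qed
  then show "\<exists>M. \<forall>k\<ge>M. \<forall>m\<ge>M. norm (l k - l m) < r" by blast
qed

lemma Hcarrier_eq_Hemb_const:
  assumes X: "X \<in> Hcarrier \<epsilon> \<omega>"
  obtains z where "X = Hemb \<epsilon> \<omega> (\<lambda>n. z)"
proof -
  let ?s = "Hrep X"
  have s: "?s \<in> HC" "X = Hclass \<epsilon> \<omega> ?s" using Hcarrier_Hrep[OF X] by auto
  have "\<exists>l. (?s k \<longlongrightarrow> l) \<omega>" for k using Aeps_convergent[OF Hcauchy_Aeps[OF s(1)]] by blast
  then obtain l where l: "\<And>k. (?s k \<longlongrightarrow> l k) \<omega>" by metis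
  then obtain z where z: "l \<longlonglongrightarrow> z"
    using Cauchy_limits_Hcauchy[OF s(1)] Cauchy_convergent_iff convergent_def by blast
  have "om_converges_to ?s (\<lambda>n. z)"
  proof -
    have "om (\<lambda>n. ?s k n - z) = cmod (l k - z) powr e0" for k
      using tendsto_diff[OF l[of k] tendsto_const] by (rule om_norm_eq_powr_lim)
    moreover have "(\<lambda>k. cmod (l k - z) powr e0) \<longlonglongrightarrow> cmod (z - z) powr e0"
      using z e0_pos by (intro tendsto_intros) auto
    ultimately show ?thesis unfolding om_converges_to_def by simp
  qed
  then have "X = Hemb \<epsilon> \<omega> (\<lambda>n. z)"
    using s Hcauchy_Aeps Aeps_const by (metis Hclass_eq_Hemb)
  then show ?thesis by (rule that)
qed

lemma H_isometric_Ce_eps_limit: "H_isometric_Ce \<epsilon> \<omega> e0"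
  unfolding H_isometric_Ce_def
proof (intro exI conjI allI)
  define \<phi> where "\<phi> z = Hemb \<epsilon> \<omega> (\<lambda>n. z)" for z
  show "\<phi> (a + b) = Hadd \<epsilon> \<omega> (\<phi> a) (\<phi> b)" for a b
    unfolding \<phi>_def by (simp add: Hadd_Hemb Aeps_const)
  show "\<phi> (a * b) = Hmul \<epsilon> \<omega> (\<phi> a) (\<phi> b)" for a b
    unfolding \<phi>_def by (simp add: Hmul_Hemb Aeps_const)
  show "\<phi> 1 = Hone \<epsilon> \<omega>" unfolding \<phi>_def Hone_def ..
  show norm_\<phi>: "Hnorm \<epsilon> \<omega> (\<phi> z) = cmod z powr e0" for z
    unfolding \<phi>_def by (simp add: Hnorm_Hemb Aeps_const om_norm_const)
  have "a = b" if "\<phi> a = \<phi> b" for a b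
  proof -
    have "Hsub \<epsilon> \<omega> (\<phi> a) (\<phi> a) = Hsub \<epsilon> \<omega> (\<phi> a) (\<phi> b)" using that by simp
    then have "\<phi> (a - a) = \<phi> (a - b)" unfolding \<phi>_def by (simp add: Hsub_Hemb Aeps_const)
    then have "cmod (a - a) powr e0 = cmod (a - b) powr e0" by (metis norm_\<phi>)
    then show "a = b" by simp
  qed
  moreover have "range \<phi> = Hcarrier \<epsilon> \<omega>"
    using Hemb_in_Hcarrier[OF Aeps_const] Hcarrier_eq_Hemb_const unfolding \<phi>_def by blast
  ultimately show "bij_betw \<phi> UNIV (Hcarrier \<epsilon> \<omega>)"
    unfolding bij_betw_def by (auto intro: injI)
qed

lemma Hnorm_one_add_one: "Hnorm \<epsilon> \<omega> (Hadd \<epsilon> \<omega> (Hone \<epsilon> \<omega>) (Hone \<epsilon> \<omega>)) = 2 powr e0"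
  unfolding Hone_def by (simp add: Hadd_Hemb Hnorm_Hemb Aeps_const om_norm_const)

lemma H_isometric_Ce_unique:
  assumes "H_isometric_Ce \<epsilon> \<omega> e"
  shows "e = e0"
proof -
  obtain \<phi> where \<phi>: "\<forall>a b. \<phi> (a + b) = Hadd \<epsilon> \<omega> (\<phi> a) (\<phi> b)" "\<phi> 1 = Hone \<epsilon> \<omega>"
    "\<forall>z. Hnorm \<epsilon> \<omega> (\<phi> z) = cmod z powr e"
    using assms unfolding H_isometric_Ce_def by blast
  have "\<phi> 2 = Hadd \<epsilon> \<omega> (Hone \<epsilon> \<omega>) (Hone \<epsilon> \<omega>)"
    using \<phi>(1,2) one_add_one by metis
  then have "(2::real) powr e = 2 powr e0" using \<phi>(3) Hnorm_one_add_one by (metis norm_numeral)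
  then show ?thesis using powr_inj[of 2 e e0] by simp
qed

lemma isometric_exponent_eq: "(SOME e. 0 < e \<and> H_isometric_Ce \<epsilon> \<omega> e) = e0"
  using e0_pos H_isometric_Ce_eps_limit H_isometric_Ce_unique
  by (metis (mono_tags, lifting) someI_ex)

lemma not_H_nonarch: "\<not> H_nonarch \<epsilon> \<omega>"
proof
  assume "H_nonarch \<epsilon> \<omega>"
  moreover have "Hone \<epsilon> \<omega> \<in> Hcarrier \<epsilon> \<omega>" unfolding Hone_def by (intro Hemb_in_Hcarrier Aeps_const)
  ultimately have "(2::real) powr e0 \<le> max (Hnorm \<epsilon> \<omega> (Hone \<epsilon> \<omega>)) (Hnorm \<epsilon> \<omega> (Hone \<epsilon> \<omega>))"
    unfolding H_nonarch_def Hnorm_one_add_one[symmetric] by blast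
  also have "\<dots> = 1" unfolding Hone_def by (simp add: Hnorm_Hemb Aeps_const om_norm_const)
  finally have "(2::real) powr e0 \<le> 1" .
  moreover have "1 < (2::real) powr e0" using e0_pos by simp
  ultimately show False by simp
qed

end

end

section \<open>Spherical distances\<close>

definition wedge :: "complex \<times> complex \<Rightarrow> complex \<times> complex \<Rightarrow> complex" where
  "wedge z w = fst z * snd w - snd z * fst w"

definition sqnorm :: "complex \<times> complex \<Rightarrow> real" where
  "sqnorm z = cmod (fst z) ^ 2 + cmod (snd z) ^ 2"

lemma dist_P1_Ce_eq:
  assumes "0 < e"
  shows "dist_P1_Ce e z w = cmod (wedge z w) powr e / (sqnorm z powr (e / 2) * sqnorm w powr (e / 2))"
  using assms by (simp add: dist_P1_Ce_def sph_arch_def wedge_def sqnorm_def powr_powr)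

lemma dist_P1_C_powr:
  assumes "0 < e"
  shows "dist_P1_C z w powr e = dist_P1_Ce e z w"
  unfolding dist_P1_C_def dist_P1_Ce_eq[OF assms] dist_P1_Ce_eq[OF zero_less_one]
  by (simp add: sqnorm_def powr_divide powr_mult powr_powr)

lemma normalized_coords_le_1:
  assumes "max (cmod (fst z)) (cmod (snd z)) = 1"
  shows "cmod (fst z) \<le> 1" "cmod (snd z) \<le> 1"
  using assms by (auto simp: max_def split: if_splits)

lemma sqnorm_normalized:
  assumes "max (cmod (fst z)) (cmod (snd z)) = 1"
  shows "1 \<le> sqnorm z" "sqnorm z \<le> 2"
proof -
  have "cmod (fst z) = 1 \<or> cmod (snd z) = 1" using assms by (auto simp: max_def split: if_splits)
  moreover have "cmod (fst z) ^ 2 \<le> 1" "cmod (snd z) ^ 2 \<le> 1"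
    using normalized_coords_le_1[OF assms] by (auto intro: power_le_one)
  ultimately show "1 \<le> sqnorm z" "sqnorm z \<le> 2" unfolding sqnorm_def by auto
qed

lemma tendsto_sph_arch:
  assumes e: "(e \<longlongrightarrow> e0) F" "0 < e0" and D: "(nD \<longlongrightarrow> D) F"
    and z: "(nz0 \<longlongrightarrow> z0) F" "(nz1 \<longlongrightarrow> z1) F" "z0 \<noteq> 0 \<or> z1 \<noteq> 0"
    and w: "(nw0 \<longlongrightarrow> w0) F" "(nw1 \<longlongrightarrow> w1) F" "w0 \<noteq> 0 \<or> w1 \<noteq> 0"
    and nonneg: "eventually (\<lambda>i. 0 \<le> nz0 i \<and> 0 \<le> nz1 i \<and> 0 \<le> nw0 i \<and> 0 \<le> nw1 i) F"
  shows "((\<lambda>i. sph_arch (e i) (nD i) (nz0 i) (nz1 i) (nw0 i) (nw1 i)) \<longlongrightarrow> sph_arch e0 D z0 z1 w0 w1) F"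
proof -
  have pos: "0 < a powr (2 / e0) + b powr (2 / e0)" if "a \<noteq> 0 \<or> b \<noteq> 0" for a b :: real
    using that by (auto intro: add_pos_nonneg add_nonneg_pos)
  have exp: "((\<lambda>i. 2 / e i) \<longlongrightarrow> 2 / e0) F" "((\<lambda>i. e i / 2) \<longlongrightarrow> e0 / 2) F"
    using e by (auto intro!: tendsto_intros)
  define Z where "Z = z0 powr (2 / e0) + z1 powr (2 / e0)"
  define W where "W = w0 powr (2 / e0) + w1 powr (2 / e0)"
  have "((\<lambda>i. nz0 i powr (2 / e i) + nz1 i powr (2 / e i)) \<longlongrightarrow> Z) F"
    "((\<lambda>i. nw0 i powr (2 / e i) + nw1 i powr (2 / e i)) \<longlongrightarrow> W) F"
    unfolding Z_def W_def using z w exp e(2) nonneg by (auto intro!: tendsto_intros elim: eventually_mono)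
  then have "((\<lambda>i. (nz0 i powr (2 / e i) + nz1 i powr (2 / e i)) powr (e i / 2) *
      (nw0 i powr (2 / e i) + nw1 i powr (2 / e i)) powr (e i / 2)) \<longlongrightarrow> Z powr (e0 / 2) * W powr (e0 / 2)) F"
    using exp pos[OF z(3)] pos[OF w(3)] unfolding Z_def W_def by (intro tendsto_mult tendsto_powr) auto
  then show ?thesis
    unfolding sph_arch_def using D pos[OF z(3)] pos[OF w(3)] unfolding Z_def W_def
    by (intro tendsto_divide) auto
qed

context eps_ultrafilter
begin

lemma max_om_norm_eq_1:
  assumes "\<And>n. max (cmod (u n)) (cmod (v n)) = 1"
  shows "max (om u) (om v) = 1"
proof -
  have "cmod (u n) \<le> 1" "cmod (v n) \<le> 1" for n
    using max.cobounded1[of "cmod (u n)" "cmod (v n)"] max.cobounded2[of "cmod (v n)" "cmod (u n)"] assms[of n]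
    by simp_all
  then have "u \<in> Aeps \<epsilon>" "v \<in> Aeps \<epsilon>" by (auto intro: Aeps_bounded)
  then have "((\<lambda>n. max (cmod (u n) powr \<epsilon> n) (cmod (v n) powr \<epsilon> n)) \<longlongrightarrow> max (om u) (om v)) \<omega>"
    by (intro tendsto_max tendsto_om_norm)
  moreover have "max (cmod (u n) powr \<epsilon> n) (cmod (v n) powr \<epsilon> n) = 1" for n
    using assms[of n] max_powr[of "cmod (u n)" "cmod (v n)" "\<epsilon> n"] eps_pos by simp
  ultimately show ?thesis using tendsto_unique[OF omega_ne_bot _ tendsto_const] by simp
qed

context
  fixes x y :: "nat \<Rightarrow> complex \<times> complex"
  assumes x_normalized: "\<And>n. max (cmod (fst (x n))) (cmod (snd (x n))) = 1"
    and y_normalized: "\<And>n. max (cmod (fst (y n))) (cmod (snd (y n))) = 1"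
begin

lemma Aeps_coords:
  "(\<lambda>n. fst (x n)) \<in> Aeps \<epsilon>" "(\<lambda>n. snd (x n)) \<in> Aeps \<epsilon>"
  "(\<lambda>n. fst (y n)) \<in> Aeps \<epsilon>" "(\<lambda>n. snd (y n)) \<in> Aeps \<epsilon>"
  using normalized_coords_le_1[OF x_normalized] normalized_coords_le_1[OF y_normalized]
  by (auto intro!: Aeps_bounded[of _ 1])

lemma max_om_norm_coords:
  "max (om (\<lambda>n. fst (x n))) (om (\<lambda>n. snd (x n))) = 1"
  "max (om (\<lambda>n. fst (y n))) (om (\<lambda>n. snd (y n))) = 1"
  by (rule max_om_norm_eq_1, rule x_normalized, rule max_om_norm_eq_1, rule y_normalized)

lemma Aeps_wedge: "(\<lambda>n. wedge (x n) (y n)) \<in> Aeps \<epsilon>"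
  unfolding wedge_def using Aeps_coords by (intro Aeps_diff Aeps_mult)

lemma dist_P1_H_pt_omega:
  "dist_P1_H \<epsilon> \<omega> (pt_omega \<epsilon> \<omega> x) (pt_omega \<epsilon> \<omega> y) =
    (if H_nonarch \<epsilon> \<omega> then om (\<lambda>n. wedge (x n) (y n))
     else sph_arch (SOME e. 0 < e \<and> H_isometric_Ce \<epsilon> \<omega> e) (om (\<lambda>n. wedge (x n) (y n)))
       (om (\<lambda>n. fst (x n))) (om (\<lambda>n. snd (x n))) (om (\<lambda>n. fst (y n))) (om (\<lambda>n. snd (y n))))"
proof -
  have "Hsub \<epsilon> \<omega> (Hmul \<epsilon> \<omega> (Hemb \<epsilon> \<omega> (\<lambda>n. fst (x n))) (Hemb \<epsilon> \<omega> (\<lambda>n. snd (y n))))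
      (Hmul \<epsilon> \<omega> (Hemb \<epsilon> \<omega> (\<lambda>n. snd (x n))) (Hemb \<epsilon> \<omega> (\<lambda>n. fst (y n))))
    = Hemb \<epsilon> \<omega> (\<lambda>n. wedge (x n) (y n))"
    unfolding wedge_def using Aeps_coords by (simp add: Hmul_Hemb Hsub_Hemb Aeps_mult)
  then show ?thesis
    using Aeps_coords Aeps_wedge max_om_norm_coords
    by (simp add: dist_P1_H_def pt_omega_def Hnorm_Hemb sph_nonarch_def)
qed

lemma tendsto_dist_P1_Ce_nonarch:
  assumes "(\<epsilon> \<longlongrightarrow> 0) \<omega>"
  shows "((\<lambda>n. dist_P1_Ce (\<epsilon> n) (x n) (y n)) \<longlongrightarrow> om (\<lambda>n. wedge (x n) (y n))) \<omega>"
proof -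
  have denom: "((\<lambda>n. sqnorm (z n) powr (\<epsilon> n / 2)) \<longlongrightarrow> 1) \<omega>"
    if "\<And>n. max (cmod (fst (z n))) (cmod (snd (z n))) = 1" for z
  proof (rule tendsto_sandwich[of "\<lambda>n. 1" _ _ "\<lambda>n. 2 powr (\<epsilon> n / 2)"])
    show "eventually (\<lambda>n. 1 \<le> sqnorm (z n) powr (\<epsilon> n / 2)) \<omega>"
      using sqnorm_normalized(1)[OF that] eps_pos[THEN less_imp_le]
      by (intro always_eventually allI ge_one_powr_ge_zero) auto
    show "eventually (\<lambda>n. sqnorm (z n) powr (\<epsilon> n / 2) \<le> 2 powr (\<epsilon> n / 2)) \<omega>"
      using sqnorm_normalized[OF that] eps_pos[THEN less_imp_le] order_trans[OF zero_le_one]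
      by (intro always_eventually allI powr_mono2) auto
    have "((\<lambda>n. 2 powr (\<epsilon> n / 2)) \<longlongrightarrow> 2 powr (0 / 2)) \<omega>"
      using assms by (intro tendsto_intros) auto
    then show "((\<lambda>n. 2 powr (\<epsilon> n / 2)) \<longlongrightarrow> 1) \<omega>" by simp
  qed simp
  have "((\<lambda>n. cmod (wedge (x n) (y n)) powr \<epsilon> n / (sqnorm (x n) powr (\<epsilon> n / 2) * sqnorm (y n) powr (\<epsilon> n / 2)))
      \<longlongrightarrow> om (\<lambda>n. wedge (x n) (y n)) / (1 * 1)) \<omega>"
    using Aeps_wedge by (intro tendsto_intros tendsto_om_norm denom x_normalized y_normalized) auto
  then show ?thesis using eps_pos by (simp add: dist_P1_Ce_eq)
qed

lemma tendsto_dist_P1_Ce_arch: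
  assumes e0: "(\<epsilon> \<longlongrightarrow> e0) \<omega>" "0 < e0"
  shows "((\<lambda>n. dist_P1_Ce (\<epsilon> n) (x n) (y n)) \<longlongrightarrow> sph_arch e0 (om (\<lambda>n. wedge (x n) (y n)))
     (om (\<lambda>n. fst (x n))) (om (\<lambda>n. snd (x n))) (om (\<lambda>n. fst (y n))) (om (\<lambda>n. snd (y n)))) \<omega>"
  unfolding dist_P1_Ce_def Let_def wedge_def[symmetric]
proof (rule tendsto_sph_arch[OF e0])
  show "om (\<lambda>n. fst (x n)) \<noteq> 0 \<or> om (\<lambda>n. snd (x n)) \<noteq> 0"
    using max_om_norm_coords(1) by auto
  show "om (\<lambda>n. fst (y n)) \<noteq> 0 \<or> om (\<lambda>n. snd (y n)) \<noteq> 0"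
    using max_om_norm_coords(2) by auto
qed (use Aeps_coords Aeps_wedge in \<open>auto intro: tendsto_om_norm\<close>)

lemma tendsto_dist_P1_Ce_dist_P1_H:
  "((\<lambda>n. dist_P1_Ce (\<epsilon> n) (x n) (y n)) \<longlongrightarrow> dist_P1_H \<epsilon> \<omega> (pt_omega \<epsilon> \<omega> x) (pt_omega \<epsilon> \<omega> y)) \<omega>"
proof -
  obtain e0 where e0: "(\<epsilon> \<longlongrightarrow> e0) \<omega>" "0 \<le> e0" by (rule eps_limit)
  show ?thesis
  proof (cases "e0 = 0")
    case True
    then show ?thesis
      using e0 H_nonarch_if_eps_tendsto_0 tendsto_dist_P1_Ce_nonarch by (simp add: dist_P1_H_pt_omega)
  next
    case False
    then have "0 < e0" using e0(2) by simp
    with e0(1) show ?thesis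
      using not_H_nonarch isometric_exponent_eq tendsto_dist_P1_Ce_arch by (simp add: dist_P1_H_pt_omega)
  qed
qed

end

end

theorem mainTheorem8:
  fixes \<epsilon> :: "nat \<Rightarrow> real"
    and x y :: "nat \<Rightarrow> complex \<times> complex"
    and \<omega> :: "nat filter"
  assumes eps: "\<forall>n. 0 < \<epsilon> n \<and> \<epsilon> n \<le> 1"
    and xnorm: "\<forall>n. max (cmod (fst (x n))) (cmod (snd (x n))) = 1"
    and ynorm: "\<forall>n. max (cmod (fst (y n))) (cmod (snd (y n))) = 1"
    and ultra: "is_ultrafilter \<omega>"
  shows "((\<lambda>n. dist_P1_C (x n) (y n) powr \<epsilon> n)
            \<longlongrightarrow> dist_P1_H \<epsilon> \<omega> (pt_omega \<epsilon> \<omega> x) (pt_omega \<epsilon> \<omega> y)) \<omega>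
       \<and> ((\<lambda>n. dist_P1_Ce (\<epsilon> n) (x n) (y n))
            \<longlongrightarrow> dist_P1_H \<epsilon> \<omega> (pt_omega \<epsilon> \<omega> x) (pt_omega \<epsilon> \<omega> y)) \<omega>"
proof -
  interpret eps_ultrafilter \<epsilon> \<omega> using eps ultra by unfold_locales auto
  have "((\<lambda>n. dist_P1_Ce (\<epsilon> n) (x n) (y n))
      \<longlongrightarrow> dist_P1_H \<epsilon> \<omega> (pt_omega \<epsilon> \<omega> x) (pt_omega \<epsilon> \<omega> y)) \<omega>"
    using xnorm ynorm by (intro tendsto_dist_P1_Ce_dist_P1_H) auto
  moreover have "dist_P1_C (x n) (y n) powr \<epsilon> n = dist_P1_Ce (\<epsilon> n) (x n) (y n)" for n
    using eps by (simp add: dist_P1_C_powr)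
  ultimately show ?thesis by simp
qed

end
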